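(* Let $G$ be a finite group of order $n$, $k$ a positive integer, $a_1,\dots,a_k,b_1,\dots,b_k$ independent uniformly random elements of $G$, and for $(i,j)\in V=[k]\times[k]$ and $x\in G$ let $I_{(i,j)}(x)$ be the indicator of the event $\{x=a_ib_j \text{ or } x=b_ja_i\}$. Let $\Gamma=(V,E)$ be the graph with $(i,j)\sim(\ell,m)$ iff ($i=\ell$ and $j\ne m$) or ($i\ne \ell$ and $j=m$). Let $x,y\in G$, $v\in V$ and $u\in V$ with $u\sim v$. Then $$\mathbb{E}[I_v(x)I_u(y)]=\frac{4}{n^2}\Big(1-\frac{|C(x)|+|C(y)|}{2n}+\frac{|C(x)\cap C(y)|}{4n}\Big).$$
   Context: $[k]=\{1,\dots,k\}$; $C(x)=\{g\in G: gx=xg\}$ is the centralizer of $x$. *)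

theory Defs
  imports "HOL-Algebra.Group" "HOL-Probability.Probability"
begin

definition centralizer_of :: "('a, 'b) monoid_scheme \<Rightarrow> 'a \<Rightarrow> 'a set" where
  "centralizer_of G x = {g \<in> carrier G. g \<otimes>\<^bsub>G\<^esub> x = x \<otimes>\<^bsub>G\<^esub> g}"

definition ind_I :: "('a, 'b) monoid_scheme \<Rightarrow> nat \<times> nat \<Rightarrow> 'a \<Rightarrow> (nat \<Rightarrow> 'a) \<times> (nat \<Rightarrow> 'a) \<Rightarrow> real" where
  "ind_I G v x ab = (if x = fst ab (fst v) \<otimes>\<^bsub>G\<^esub> snd ab (snd v) \<or> x = snd ab (snd v) \<otimes>\<^bsub>G\<^esub> fst ab (fst v)
                      then 1 else 0)"

definition verts :: "nat \<Rightarrow> (nat \<times> nat) set" where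
  "verts k = {1..k} \<times> {1..k}"

definition gamma_adj :: "nat \<times> nat \<Rightarrow> nat \<times> nat \<Rightarrow> bool" where
  "gamma_adj u v \<longleftrightarrow> (fst u = fst v \<and> snd u \<noteq> snd v) \<or> (fst u \<noteq> fst v \<and> snd u = snd v)"

definition rand_ab :: "('a, 'b) monoid_scheme \<Rightarrow> nat \<Rightarrow> ((nat \<Rightarrow> 'a) \<times> (nat \<Rightarrow> 'a)) pmf" where
  "rand_ab G k = pmf_of_set ((PiE {1..k} (\<lambda>_. carrier G)) \<times> (PiE {1..k} (\<lambda>_. carrier G)))"

end

theory Submission
  imports Defs
begin

text \<open>
  If u and v are adjacent, the two indicators share exactly one random element c (a common a_i
  or a common b_j) and otherwise involve two further independent uniform elements. For fixed c,
  the elements d with x \<in> {cd, dc} are inv c \<otimes> x and x \<otimes> inv c, which coincide iff c \<in> C(x);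
  so there are 2 - [c \<in> C(x)] of them. Hence the expectation is
  (\<Sum>c. (2 - [c \<in> C(x)]) (2 - [c \<in> C(y)])) / n^3 = (4n - 2|C(x)| - 2|C(y)| + |C(x) \<inter> C(y)|) / n^3.
\<close>

lemma pair_pmf_of_set:
  assumes "finite A" "A \<noteq> {}" "finite B" "B \<noteq> {}"
  shows "pair_pmf (pmf_of_set A) (pmf_of_set B) = pmf_of_set (A \<times> B)"
proof (rule pmf_eqI)
  fix z :: "'a \<times> 'b"
  show "pmf (pair_pmf (pmf_of_set A) (pmf_of_set B)) z = pmf (pmf_of_set (A \<times> B)) z"
    using assms by (cases z) (simp add: pmf_pair card_cartesian_product indicator_def)
qed

lemma Pi_pmf_of_set_PiE:
  assumes "finite I" "\<And>i. i \<in> I \<Longrightarrow> finite (B i)" "\<And>i. i \<in> I \<Longrightarrow> B i \<noteq> {}"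
  shows "pmf_of_set (PiE I B) = Pi_pmf I undefined (\<lambda>i. pmf_of_set (B i))"
proof -
  have "PiE_dflt I undefined B = PiE I B"
    by (auto simp: PiE_dflt_def PiE_def extensional_def)
  then show ?thesis using Pi_pmf_of_set[of I B undefined] assms by simp
qed

lemma map_pmf_Pi_pmf_two_components:
  assumes "finite I" "j \<in> I" "m \<in> I" "j \<noteq> m"
  shows "map_pmf (\<lambda>f. (f j, f m)) (Pi_pmf I d p) = pair_pmf (p j) (p m)"
proof -
  have I: "I = insert j (I - {j})" using assms by auto
  have "map_pmf (\<lambda>f. (f j, f m)) (Pi_pmf I d p)
      = map_pmf (\<lambda>(y, f). (id y, f m)) (pair_pmf (p j) (Pi_pmf (I - {j}) d p))"
    using assms by (subst I, subst Pi_pmf_insert) (auto simp: pmf.map_comp o_def case_prod_unfold)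
  also have "\<dots> = pair_pmf (p j) (p m)"
    unfolding map_pair using assms by (simp add: Pi_pmf_component)
  finally show ?thesis .
qed

lemma map_pmf_PiE_shared_row:
  assumes "finite I" "finite J" "i \<in> I" "j \<in> J" "m \<in> J" "j \<noteq> m"
    and "\<And>i. i \<in> I \<Longrightarrow> finite (A i) \<and> A i \<noteq> {}" "\<And>j. j \<in> J \<Longrightarrow> finite (B j) \<and> B j \<noteq> {}"
  shows "map_pmf (\<lambda>(a, b). (a i, b j, b m)) (pmf_of_set (PiE I A \<times> PiE J B))
       = pmf_of_set (A i \<times> B j \<times> B m)"
proof -
  have "pmf_of_set (PiE I A \<times> PiE J B) = pair_pmf (pmf_of_set (PiE I A)) (pmf_of_set (PiE J B))"
    using assms by (intro pair_pmf_of_set[symmetric]) (auto simp: finite_PiE PiE_eq_empty_iff)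
  also have "map_pmf (\<lambda>(a, b). (a i, b j, b m)) \<dots>
      = pair_pmf (map_pmf (\<lambda>a. a i) (pmf_of_set (PiE I A))) (map_pmf (\<lambda>b. (b j, b m)) (pmf_of_set (PiE J B)))"
    by (rule map_pair)
  also have "\<dots> = pair_pmf (pmf_of_set (A i)) (pair_pmf (pmf_of_set (B j)) (pmf_of_set (B m)))"
    using assms by (simp add: Pi_pmf_of_set_PiE Pi_pmf_component map_pmf_Pi_pmf_two_components)
  also have "\<dots> = pmf_of_set (A i \<times> B j \<times> B m)"
    using assms by (simp add: pair_pmf_of_set)
  finally show ?thesis .
qed

lemma expectation_pmf_of_set_shared_factor:
  fixes f :: "'a \<Rightarrow> 'b \<Rightarrow> real" and g :: "'a \<Rightarrow> 'c \<Rightarrow> real"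
  assumes "finite A" "finite B" "finite C" "A \<noteq> {}" "B \<noteq> {}" "C \<noteq> {}"
  shows "measure_pmf.expectation (pmf_of_set (A \<times> B \<times> C)) (\<lambda>(c, d, e). f c d * g c e)
       = (\<Sum>c\<in>A. (\<Sum>d\<in>B. f c d) * (\<Sum>e\<in>C. g c e)) / (card A * card B * card C)"
  using assms
  by (simp add: integral_pmf_of_set sum.cartesian_product[symmetric] sum_product card_cartesian_product
                sum.swap[of _ B] mult.assoc)

definition factorizes :: "('a, 'b) monoid_scheme \<Rightarrow> 'a \<Rightarrow> 'a \<Rightarrow> 'a \<Rightarrow> bool" where
  "factorizes G x c d \<longleftrightarrow> x = c \<otimes>\<^bsub>G\<^esub> d \<or> x = d \<otimes>\<^bsub>G\<^esub> c"

lemma factorizes_commute: "factorizes G x c d \<longleftrightarrow> factorizes G x d c"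
  by (auto simp: factorizes_def)

lemma ind_I_eq_factorizes: "ind_I G v x ab = of_bool (factorizes G x (fst ab (fst v)) (snd ab (snd v)))"
  by (simp add: ind_I_def factorizes_def)

lemma (in group) factorizes_set_eq:
  assumes "c \<in> carrier G" "x \<in> carrier G"
  shows "{d \<in> carrier G. factorizes G x c d} = {inv c \<otimes> x, x \<otimes> inv c}"
proof -
  have "c \<otimes> (inv c \<otimes> x) = x" "x \<otimes> inv c \<otimes> c = x"
    using assms by (simp_all add: m_assoc[symmetric]) (simp add: m_assoc)
  then show ?thesis using assms by (auto simp: factorizes_def inv_solve_left inv_solve_right)
qed

lemma (in group) left_right_quotient_eq_iff:
  assumes "c \<in> carrier G" "x \<in> carrier G"
  shows "inv c \<otimes> x = x \<otimes> inv c \<longleftrightarrow> c \<in> centralizer_of G x"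
proof -
  have "c \<otimes> (inv c \<otimes> x) \<otimes> c = x \<otimes> c" "c \<otimes> (x \<otimes> inv c) \<otimes> c = c \<otimes> x"
    using assms by (simp_all add: m_assoc[symmetric]) (simp add: m_assoc)
  moreover have "inv c \<otimes> x = x \<otimes> inv c \<longleftrightarrow> c \<otimes> (inv c \<otimes> x) \<otimes> c = c \<otimes> (x \<otimes> inv c) \<otimes> c"
    using assms by (simp del: l_inv r_inv)
  ultimately show ?thesis using assms by (auto simp: centralizer_of_def)
qed

lemma (in group) card_factorizes:
  assumes "c \<in> carrier G" "x \<in> carrier G"
  shows "card {d \<in> carrier G. factorizes G x c d} = (if c \<in> centralizer_of G x then 1 else 2)"
  using assms by (simp add: factorizes_set_eq left_right_quotient_eq_iff[symmetric])

lemma (in group) sum_card_factorizes_products: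
  assumes "finite (carrier G)" "x \<in> carrier G" "y \<in> carrier G"
  shows "(\<Sum>c\<in>carrier G. real (card {d \<in> carrier G. factorizes G x c d})
                         * real (card {d \<in> carrier G. factorizes G y c d}))
       = 4 * real (card (carrier G)) - 2 * real (card (centralizer_of G x))
         - 2 * real (card (centralizer_of G y)) + real (card (centralizer_of G x \<inter> centralizer_of G y))"
proof -
  let ?Cx = "centralizer_of G x" and ?Cy = "centralizer_of G y"
  have count: "(\<Sum>c\<in>carrier G. of_bool (c \<in> S)) = real (card S)" if "S \<subseteq> carrier G" for S
    using assms(1) that by (simp add: Int_absorb1 Int_def[symmetric])
  have sub: "?Cx \<subseteq> carrier G" "?Cy \<subseteq> carrier G"
    by (auto simp: centralizer_of_def)
  have "(\<Sum>c\<in>carrier G. real (card {d \<in> carrier G. factorizes G x c d})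
                         * real (card {d \<in> carrier G. factorizes G y c d}))
      = (\<Sum>c\<in>carrier G. 4 - 2 * of_bool (c \<in> ?Cx) - 2 * of_bool (c \<in> ?Cy) + of_bool (c \<in> ?Cx \<inter> ?Cy))"
    using assms by (intro sum.cong) (auto simp: card_factorizes)
  also have "\<dots> = 4 * real (card (carrier G)) - 2 * (\<Sum>c\<in>carrier G. of_bool (c \<in> ?Cx))
      - 2 * (\<Sum>c\<in>carrier G. of_bool (c \<in> ?Cy)) + (\<Sum>c\<in>carrier G. of_bool (c \<in> ?Cx \<inter> ?Cy))"
    by (simp only: sum.distrib sum_subtractf sum_distrib_left[symmetric] sum_constant)
  finally show ?thesis
    using sub by (simp only: count le_infI1)
qed

lemma expectation_rand_ab_shared_row:
  fixes x y :: 'a and G :: "('a, 'b) monoid_scheme"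
  assumes "finite (carrier G)" "carrier G \<noteq> {}" "i \<in> {1..k}" "j \<in> {1..k}" "m \<in> {1..k}" "j \<noteq> m"
  shows "measure_pmf.expectation (rand_ab G k)
           (\<lambda>(a, b). of_bool (factorizes G x (a i) (b j)) * of_bool (factorizes G y (a i) (b m)))
       = (\<Sum>c\<in>carrier G. real (card {d \<in> carrier G. factorizes G x c d})
                         * real (card {d \<in> carrier G. factorizes G y c d})) / real (card (carrier G)) ^ 3"
proof -
  let ?C = "carrier G"
  have "measure_pmf.expectation (rand_ab G k)
           (\<lambda>(a, b). of_bool (factorizes G x (a i) (b j)) * of_bool (factorizes G y (a i) (b m)) :: real)
      = measure_pmf.expectation (map_pmf (\<lambda>(a, b). (a i, b j, b m)) (rand_ab G k))
           (\<lambda>(c, d, e). of_bool (factorizes G x c d) * of_bool (factorizes G y c e))"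
    by (simp only: integral_map_pmf case_prod_unfold fst_conv snd_conv)
  also have "map_pmf (\<lambda>(a, b). (a i, b j, b m)) (rand_ab G k) = pmf_of_set (?C \<times> ?C \<times> ?C)"
    unfolding rand_ab_def using assms by (intro map_pmf_PiE_shared_row) auto
  finally show ?thesis
    using assms by (simp add: expectation_pmf_of_set_shared_factor Int_def power3_eq_cube mult.assoc)
qed

lemma rand_ab_swap:
  assumes "finite (carrier G)" "carrier G \<noteq> {}"
  shows "map_pmf prod.swap (rand_ab G k) = rand_ab G k"
  unfolding rand_ab_def using assms
  by (subst map_pmf_of_set_inj) (auto simp: finite_PiE PiE_eq_empty_iff product_swap)

lemma expectation_rand_ab_shared_column:
  fixes x y :: 'a and G :: "('a, 'b) monoid_scheme"
  assumes "finite (carrier G)" "carrier G \<noteq> {}" "i \<in> {1..k}" "l \<in> {1..k}" "m \<in> {1..k}" "i \<noteq> l"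
  shows "measure_pmf.expectation (rand_ab G k)
           (\<lambda>(a, b). of_bool (factorizes G x (a i) (b m)) * of_bool (factorizes G y (a l) (b m)))
       = (\<Sum>c\<in>carrier G. real (card {d \<in> carrier G. factorizes G x c d})
                         * real (card {d \<in> carrier G. factorizes G y c d})) / real (card (carrier G)) ^ 3"
proof -
  have "measure_pmf.expectation (rand_ab G k)
           (\<lambda>(a, b). of_bool (factorizes G x (a i) (b m)) * of_bool (factorizes G y (a l) (b m)) :: real)
      = measure_pmf.expectation (map_pmf prod.swap (rand_ab G k))
           (\<lambda>(a, b). of_bool (factorizes G x (a i) (b m)) * of_bool (factorizes G y (a l) (b m)))"
    by (simp only: rand_ab_swap[OF assms(1,2)])
  also have "\<dots> = measure_pmf.expectation (rand_ab G k)
        (\<lambda>(a, b). of_bool (factorizes G x (a m) (b i)) * of_bool (factorizes G y (a m) (b l)))"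
    by (simp add: case_prod_unfold factorizes_commute)
  finally show ?thesis
    using expectation_rand_ab_shared_row[OF assms(1,2,5,3,4,6)] by simp
qed

theorem proposition4p6:
  fixes G :: "('a, 'b) monoid_scheme" and k :: nat and x y :: 'a and u v :: "nat \<times> nat"
  assumes "group G" and "finite (carrier G)" and "k \<ge> 1"
    and "x \<in> carrier G" and "y \<in> carrier G"
    and "v \<in> verts k" and "u \<in> verts k" and "gamma_adj u v"
  shows "measure_pmf.expectation (rand_ab G k) (\<lambda>ab. ind_I G v x ab * ind_I G u y ab)
     = 4 / (real (card (carrier G)))^2 *
       (1 - (real (card (centralizer_of G x)) + real (card (centralizer_of G y))) / (2 * real (card (carrier G)))
          + real (card (centralizer_of G x \<inter> centralizer_of G y)) / (4 * real (card (carrier G))))"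
proof -
  interpret group G by fact
  have nonempty: "carrier G \<noteq> {}" by blast
  obtain i m l j where v: "v = (i, m)" and u: "u = (l, j)" by (cases v, cases u)
  have idx: "i \<in> {1..k}" "m \<in> {1..k}" "l \<in> {1..k}" "j \<in> {1..k}"
    using assms(6,7) by (auto simp: v u verts_def)
  let ?N = "\<lambda>z c. real (card {d \<in> carrier G. factorizes G z c d})"
  have "measure_pmf.expectation (rand_ab G k) (\<lambda>ab. ind_I G v x ab * ind_I G u y ab)
      = (\<Sum>c\<in>carrier G. ?N x c * ?N y c) / real (card (carrier G)) ^ 3"
  proof (cases "l = i")
    case True
    with assms(8) have "j \<noteq> m" by (auto simp: u v gamma_adj_def)
    then show ?thesis
      using expectation_rand_ab_shared_row[OF assms(2) nonempty idx(1,2,4)]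
      by (simp add: ind_I_eq_factorizes u v True case_prod_unfold)
  next
    case False
    with assms(8) have "j = m" by (auto simp: u v gamma_adj_def)
    with False show ?thesis
      using expectation_rand_ab_shared_column[OF assms(2) nonempty idx(1,3,2)]
      by (simp add: ind_I_eq_factorizes u v case_prod_unfold)
  qed
  then show ?thesis
    using sum_card_factorizes_products[OF assms(2,4,5)] nonempty assms(2)
    by (simp add: field_simps power2_eq_square power3_eq_cube)
qed

end
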